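(* Let $\ell\in\mathbb{N}$, $\alpha_j,\beta_j\in\mathbb{N}$ for $j=1,\dots,\ell$, and $q\in\mathbb{C}$ with $|q|<1$. Then $$\mathbf{R}^{\alpha_1}\big[\mathbf{y}^{\beta_1}\cdots\mathbf{R}^{\alpha_\ell}[\mathbf{y}^{\beta_\ell}]\cdots\big](1)=\mathbf{R}^{\beta_\ell}\big[\mathbf{y}^{\alpha_\ell}\mathbf{R}^{\beta_{\ell-1}}[\mathbf{y}^{\alpha_{\ell-1}}\cdots\mathbf{R}^{\beta_1}[\mathbf{y}^{\alpha_1}]\cdots]\big](1),$$ where both sides mean the value at $t=1$ of the corresponding power series in $t$.
   Context: $\mathbf{y}(t)=\frac{t}{1-t}$ and $\mathbf{y}^{\beta}$ denotes multiplication by $\mathbf{y}(t)^\beta$. $\mathbf{R}$ is the operator $\mathbf{R}[f](t)=\sum_{k\ge1}f(q^kt)$ on power series in $t$ without constant term, and $\mathbf{R}^n$ its $n$-fold composition. *)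

theory Defs
  imports Complex_Main "HOL-Computational_Algebra.Formal_Power_Series"
begin

text \<open>y(t) = t/(1-t) = sum_{n>=1} t^n as a formal power series.\<close>
definition yfps :: "complex fps" where
  "yfps = Abs_fps (\<lambda>n. if n = 0 then 0 else 1)"

text \<open>R[f](t) = sum_{k>=1} f(q^k t): the coefficient of t^n is
  sum_{k>=1} (q^k)^n * f_n (f is assumed to have no constant term).\<close>
definition Rop :: "complex \<Rightarrow> complex fps \<Rightarrow> complex fps" where
  "Rop q f = Abs_fps (\<lambda>n. (\<Sum>k. (q ^ (Suc k)) ^ n * fps_nth f n))"

fun nestR :: "complex \<Rightarrow> (nat \<times> nat) list \<Rightarrow> complex fps" where
  "nestR q [] = 1"
| "nestR q ((a, b) # rest) = (Rop q ^^ a) (yfps ^ b * nestR q rest)"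

definition eval_at_1 :: "complex fps \<Rightarrow> complex" where
  "eval_at_1 f = (\<Sum>n. fps_nth f n)"

end

theory Submission
  imports Defs "HOL-Analysis.FPS_Convergence" "HOL-Analysis.Infinite_Sum"
begin

text \<open>Write \<open>\<langle>F, G\<rangle> = \<Sum>n. F(q^n) [t^n]G\<close> (\<open>qpair\<close>). Since \<open>R\<^sup>a\<close> multiplies \<open>[t^n]\<close> by
  \<open>(q^n/(1-q^n))^a = y(q^n)^a = \<Sum>m. [t^m]y^a q^(nm)\<close>, interchanging the summations of an
  absolutely convergent double series shows that \<open>R\<^sup>a\<close> is adjoint to multiplication by \<open>y^a\<close>,
  while multiplication by \<open>y^b\<close> is adjoint to \<open>R\<^sup>b\<close> term by term. As \<open>\<langle>F, 1\<rangle> = F(1)\<close> and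
  \<open>\<langle>1, G\<rangle> = G(1)\<close>, moving the operators of the left-hand nest across one at a time turns the
  left-hand side into the right-hand side. All nests have radius of convergence greater than 1,
  because every application of \<open>R\<close> contributes the decaying factor \<open>q^n/(1-q^n)\<close>.\<close>

lemma summable_on_if_dominated_by_product:
  fixes F :: "nat \<times> nat \<Rightarrow> complex"
  assumes bound: "\<And>x y. norm (F (x, y)) \<le> A x * B y"
    and "summable A" "summable B" "\<And>x. 0 \<le> A x" "\<And>y. 0 \<le> B y"
  shows "F summable_on UNIV"
proof -
  have rows: "((\<lambda>y. A x * B y) has_sum (A x * suminf B)) UNIV" for x
    by (rule sums_nonneg_imp_has_sum) (use sums_mult[OF summable_sums] assms in auto)
  have "(\<lambda>x. A x * suminf B) summable_on UNIV"
    using assms by (simp add: summable_on_UNIV_nonneg_real_iff summable_mult2 suminf_nonneg)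
  then have "(\<lambda>p. A (fst p) * B (snd p)) summable_on Sigma UNIV (\<lambda>_. UNIV)"
    by (rule summable_on_SigmaI[rotated]) (use rows assms in auto)
  then have "(\<lambda>p. norm (A (fst p) * B (snd p))) summable_on UNIV"
    using assms by (simp add: abs_mult)
  then have "(\<lambda>p. norm (F p)) summable_on UNIV"
    by (rule summable_on_comparison_test) (use bound assms in \<open>auto simp: abs_mult\<close>)
  then show ?thesis
    by (simp add: summable_on_iff_abs_summable_on_complex)
qed

lemma sums_infsum_rows:
  fixes F :: "nat \<times> nat \<Rightarrow> complex"
  assumes F: "F summable_on UNIV" and rows: "\<And>x. (\<lambda>y. F (x, y)) sums g x"
  shows "g sums infsum F UNIV"
proof -
  have "(\<lambda>y. F (x, y)) summable_on UNIV" for x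
    using summable_on_SigmaD1[of "\<lambda>x y. F (x, y)" UNIV "\<lambda>_. UNIV" x] F by simp
  then have "((\<lambda>y. F (x, y)) has_sum g x) UNIV" for x
    by (metis has_sum_imp_sums has_sum_infsum rows sums_unique2)
  then have "(g has_sum infsum F UNIV) UNIV"
    using has_sum_SigmaD[where f = F and A = UNIV and B = "\<lambda>_. UNIV"] has_sum_infsum[OF F]
    by auto
  then show ?thesis
    by (rule has_sum_imp_sums)
qed

lemma sums_infsum_columns:
  fixes F :: "nat \<times> nat \<Rightarrow> complex"
  assumes F: "F summable_on UNIV" and columns: "\<And>y. (\<lambda>x. F (x, y)) sums h y"
  shows "h sums infsum F UNIV"
proof -
  have swap: "bij_betw prod.swap (UNIV :: (nat \<times> nat) set) UNIV"
    by (simp add: bij_swap)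
  have "(\<lambda>p. F (prod.swap p)) summable_on UNIV"
    using summable_on_reindex_bij_betw[OF swap, of F] F by simp
  then have "h sums infsum (\<lambda>p. F (prod.swap p)) UNIV"
    by (rule sums_infsum_rows) (use columns in simp)
  then show ?thesis
    using infsum_reindex_bij_betw[OF swap, of F] by simp
qed

lemma sums_infsum_antidiagonals:
  fixes F :: "nat \<times> nat \<Rightarrow> complex"
  assumes F: "F summable_on UNIV"
  shows "(\<lambda>n. \<Sum>m\<le>n. F (n - m, m)) sums infsum F UNIV"
proof -
  have "((\<lambda>p. F ((\<lambda>(n, m). (n - m, m)) p)) has_sum infsum F UNIV) (Sigma UNIV (\<lambda>n. {..n}))
      \<longleftrightarrow> (F has_sum infsum F UNIV) UNIV"
    by (rule has_sum_reindex_bij_witness[where i = "\<lambda>(k, m). (k + m, m)"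
          and j = "\<lambda>(n, m). (n - m, m)"]) auto
  then have "((\<lambda>p. F ((\<lambda>(n, m). (n - m, m)) p)) has_sum infsum F UNIV) (Sigma UNIV (\<lambda>n. {..n}))"
    using has_sum_infsum[OF F] by simp
  then have "((\<lambda>n. \<Sum>m\<le>n. F (n - m, m)) has_sum infsum F UNIV) UNIV"
    by (rule has_sum_SigmaD) auto
  then show ?thesis
    by (rule has_sum_imp_sums)
qed

lemma less_fps_conv_radius:
  "r < 1 \<Longrightarrow> 1 \<le> fps_conv_radius f \<Longrightarrow> ereal r < fps_conv_radius f"
  by (rule order.strict_trans2) simp_all

lemma summable_norm_fps_nth_times_power:
  fixes f :: "complex fps"
  assumes "0 \<le> r" and "ereal r < fps_conv_radius f"
  shows "summable (\<lambda>n. norm (fps_nth f n) * r ^ n)"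
  using norm_summable_fps[of "complex_of_real r" f] assms by (simp add: norm_mult norm_power)

lemma eval_fps_linear_bound:
  fixes H :: "complex fps"
  assumes H0: "fps_nth H 0 = 0" and r: "0 \<le> r" "ereal r < fps_conv_radius H"
  obtains K where "0 \<le> K" and "\<And>z. norm z \<le> r \<Longrightarrow> norm (eval_fps H z) \<le> K * norm z"
proof
  let ?S = "fps_shift 1 H"
  define K where "K = (\<Sum>n. norm (fps_nth ?S n) * r ^ n)"
  have S: "summable (\<lambda>n. norm (fps_nth ?S n) * r ^ n)"
    using summable_norm_fps_nth_times_power[of r ?S] r by simp
  then show "0 \<le> K"
    unfolding K_def using r by (intro suminf_nonneg) auto
  fix z :: complex
  assume z: "norm z \<le> r"
  then have z_radius: "ereal (norm z) < fps_conv_radius ?S"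
    using r(2) by (simp add: order.strict_trans1[of _ "ereal r"])
  have "H = ?S * fps_X"
    by (rule fps_ext) (simp add: H0)
  moreover have "eval_fps (?S * fps_X) z = eval_fps ?S z * eval_fps fps_X z"
    by (rule eval_fps_mult) (use z_radius in simp_all)
  ultimately have "eval_fps H z = eval_fps ?S z * z"
    by simp
  moreover have "norm (eval_fps ?S z) \<le> K"
  proof -
    have Sz: "summable (\<lambda>n. norm (fps_nth ?S n * z ^ n))"
      by (rule norm_summable_fps[OF z_radius])
    have "norm (eval_fps ?S z) \<le> (\<Sum>n. norm (fps_nth ?S n * z ^ n))"
      unfolding eval_fps_def by (rule summable_norm[OF Sz])
    also have "\<dots> \<le> K"
      unfolding K_def using z
      by (intro suminf_le[OF _ Sz S]) (simp add: norm_mult norm_power mult_left_mono power_mono)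
    finally show ?thesis .
  qed
  ultimately show "norm (eval_fps H z) \<le> K * norm z"
    by (simp add: norm_mult mult_right_mono)
qed

lemma fps_nth_yfps: "fps_nth yfps n = (if n = 0 then 0 else 1)"
  by (simp add: yfps_def)

lemma fps_nth_yfps_power_0: "0 < b \<Longrightarrow> fps_nth (yfps ^ b) 0 = 0"
  by (simp add: fps_power_zeroth fps_nth_yfps)

lemma fps_conv_radius_yfps: "1 \<le> fps_conv_radius yfps"
  unfolding fps_conv_radius_def
proof (rule conv_radius_geI_ex')
  fix r :: real
  assume r: "0 < r" "ereal r < 1"
  then have "summable (\<lambda>n. r ^ n)"
    by (intro summable_geometric) simp
  then show "summable (\<lambda>n. fps_nth yfps n * complex_of_real r ^ n)"
    by (rule summable_comparison_test'[where N = 0]) (use r in \<open>simp add: fps_nth_yfps norm_power\<close>)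
qed

lemma fps_conv_radius_yfps_power_mult:
  assumes "1 \<le> fps_conv_radius f"
  shows "1 \<le> fps_conv_radius (yfps ^ b * f)"
proof -
  have "1 \<le> fps_conv_radius (yfps ^ b)"
    using fps_conv_radius_yfps fps_conv_radius_power order_trans by blast
  with assms have "1 \<le> min (fps_conv_radius (yfps ^ b)) (fps_conv_radius f)"
    by simp
  then show ?thesis
    using fps_conv_radius_mult order_trans by blast
qed

lemma eval_fps_yfps: "norm z < 1 \<Longrightarrow> eval_fps yfps z = z / (1 - z)"
proof -
  assume z: "norm z < 1"
  have "(\<lambda>n. z ^ n - (if n = 0 then 1 else 0)) sums (1 / (1 - z) - 1)"
    using sums_diff[OF geometric_sums[OF z] sums_single[of 0 "\<lambda>_. 1"]] by simp
  moreover have "1 - z \<noteq> 0"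
    using z by auto
  then have "1 / (1 - z) - 1 = z / (1 - z)"
    by (simp add: field_simps)
  moreover have "(\<lambda>n. fps_nth yfps n * z ^ n) = (\<lambda>n. z ^ n - (if n = 0 then 1 else 0))"
    by (auto simp: fps_nth_yfps)
  ultimately show ?thesis
    by (simp add: eval_fps_def sums_iff)
qed

lemma eval_fps_yfps_power_mult:
  assumes "norm z < 1" and "1 \<le> fps_conv_radius f"
  shows "eval_fps (yfps ^ b * f) z = (z / (1 - z)) ^ b * eval_fps f z"
  using assms fps_conv_radius_yfps
  by (simp add: eval_fps_mult eval_fps_power eval_fps_yfps less_fps_conv_radius
      fps_conv_radius_yfps_power_mult[where f = 1, simplified])

text \<open>The factor \<open>\<Sum>k\<ge>1. (q^k)^n\<close> by which \<open>R\<close> scales the coefficient of \<open>t^n\<close>. At \<open>n = 0\<close>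
  the formula gives the junk value \<open>1/0 = 0\<close>, which is harmless since \<open>R\<close> is only applied to
  series without constant term.\<close>
definition rfactor :: "complex \<Rightarrow> nat \<Rightarrow> complex" where
  "rfactor q n = q ^ n / (1 - q ^ n)"

lemma fps_nth_Rop:
  assumes "fps_nth f 0 = 0" and q: "norm q < 1"
  shows "fps_nth (Rop q f) n = rfactor q n * fps_nth f n"
proof (cases "n = 0")
  case True
  then show ?thesis
    by (simp add: Rop_def assms rfactor_def)
next
  case False
  then have "norm (q ^ n) < 1"
    using q by (simp add: norm_power power_less_one_iff)
  then have "(\<lambda>k. q ^ n * (q ^ n) ^ k * fps_nth f n) sums (q ^ n * (1 / (1 - q ^ n)) * fps_nth f n)"
    by (intro sums_mult sums_mult2 geometric_sums)
  then have "(\<lambda>k. (q ^ Suc k) ^ n * fps_nth f n) sums (rfactor q n * fps_nth f n)"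
    by (simp add: rfactor_def power_mult_distrib mult.commute flip: power_mult)
  then show ?thesis
    by (simp add: Rop_def sums_iff)
qed

lemma fps_nth_Rop_power:
  assumes "fps_nth f 0 = 0" and "norm q < 1"
  shows "fps_nth ((Rop q ^^ a) f) n = rfactor q n ^ a * fps_nth f n"
proof (induction a arbitrary: n)
  case (Suc a)
  have "fps_nth ((Rop q ^^ a) f) 0 = 0"
    using Suc.IH[of 0] assms(1) by simp
  then show ?case
    using fps_nth_Rop[OF _ assms(2)] Suc.IH by simp
qed simp

lemma norm_rfactor_le:
  assumes "norm q < 1"
  shows "norm (rfactor q n) \<le> norm q ^ n / (1 - norm q)"
proof (cases "n = 0")
  case False
  have "norm q ^ n \<le> norm q"
    using power_decreasing[of 1 n "norm q"] False assms by simp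
  moreover have "1 - norm q ^ n \<le> norm (1 - q ^ n)"
    using norm_triangle_ineq2[of 1 "q ^ n"] by (simp add: norm_power)
  ultimately have "1 - norm q \<le> norm (1 - q ^ n)"
    by linarith
  then show ?thesis
    using assms by (simp add: rfactor_def norm_divide norm_power frac_le)
qed (use assms in \<open>simp add: rfactor_def\<close>)

lemma fps_conv_radius_Rop:
  assumes "fps_nth f 0 = 0" and q: "norm q < 1" and f: "1 \<le> fps_conv_radius f"
  shows "1 < fps_conv_radius (Rop q f)"
proof -
  define s where "s = (1 + norm q) / 2"
  have s: "0 < s" "norm q < s" "s < 1"
    using q by (simp_all add: s_def add_pos_nonneg)
  have "ereal (norm q / s) < fps_conv_radius f"
    using s f by (intro less_fps_conv_radius) auto
  then have "summable (\<lambda>n. norm (fps_nth f n) * (norm q / s) ^ n / (1 - norm q))"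
    using s by (intro summable_divide summable_norm_fps_nth_times_power) auto
  then have "summable (\<lambda>n. fps_nth (Rop q f) n * complex_of_real (1 / s) ^ n)"
  proof (rule summable_comparison_test'[where N = 0])
    fix n
    have "norm (rfactor q n) * norm (fps_nth f n) * (1 / s) ^ n
        \<le> norm q ^ n / (1 - norm q) * norm (fps_nth f n) * (1 / s) ^ n"
      using norm_rfactor_le[OF q, of n] s by (intro mult_right_mono) auto
    then show "norm (fps_nth (Rop q f) n * complex_of_real (1 / s) ^ n)
        \<le> norm (fps_nth f n) * (norm q / s) ^ n / (1 - norm q)"
      using s by (simp add: fps_nth_Rop[OF assms(1,2)] norm_mult norm_divide norm_power power_divide
          abs_of_nonneg mult_ac)
  qed
  then have "ereal (norm (complex_of_real (1 / s))) \<le> fps_conv_radius (Rop q f)"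
    unfolding fps_conv_radius_def by (rule conv_radius_geI)
  then have "ereal (1 / s) \<le> fps_conv_radius (Rop q f)"
    using s by (simp del: of_real_divide)
  moreover have "(1 :: ereal) < ereal (1 / s)"
    using s by simp
  ultimately show ?thesis
    by (rule order.strict_trans2[rotated])
qed

lemma fps_conv_radius_Rop_power:
  assumes "0 < a" and "fps_nth f 0 = 0" and "norm q < 1" and "1 \<le> fps_conv_radius f"
  shows "1 < fps_conv_radius ((Rop q ^^ a) f)"
  using assms(1)
proof (induction a rule: nat_induct_non_zero)
  case (Suc a)
  then show ?case
    using fps_conv_radius_Rop[OF _ assms(3) less_imp_le] fps_nth_Rop_power[OF assms(2,3), of a 0]
      assms(2) by simp
qed (use fps_conv_radius_Rop assms in simp)

lemma fps_conv_radius_nestR: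
  assumes "\<forall>(a, b) \<in> set L. 0 < a \<and> 0 < b" and q: "norm q < 1"
  shows "1 < fps_conv_radius (nestR q L)"
  using assms(1)
proof (induction L)
  case (Cons ab L)
  obtain a b where ab: "ab = (a, b)"
    by fastforce
  with Cons have "0 < a" "0 < b" "1 \<le> fps_conv_radius (nestR q L)"
    by auto
  then show ?case
    using fps_conv_radius_Rop_power[OF _ _ q fps_conv_radius_yfps_power_mult] fps_nth_yfps_power_0
    by (simp add: ab)
qed simp

lemma summable_fps_nth_nestR:
  assumes "\<forall>(a, b) \<in> set L. 0 < a \<and> 0 < b" and "norm q < 1"
  shows "summable (fps_nth (nestR q L))"
  using summable_fps[of 1 "nestR q L"] fps_conv_radius_nestR[OF assms] by (simp add: one_ereal_def)

lemma norm_power_mult_power_le: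
  fixes q x :: complex
  assumes "norm q \<le> 1" and "norm x \<le> 1" and "0 < n" and "0 < m"
  shows "norm ((q ^ m * x) ^ n) \<le> sqrt (norm q) ^ n * sqrt (norm q) ^ m"
proof -
  have "norm ((q ^ m * x) ^ n) = (norm q ^ m * norm x) ^ n"
    by (simp add: norm_mult norm_power)
  also have "\<dots> \<le> (norm q ^ m) ^ n"
    using assms(2) by (intro power_mono) (simp_all add: mult_left_le)
  also have "\<dots> = sqrt (norm q) ^ (2 * (m * n))"
    by (simp add: power_mult)
  also have "\<dots> \<le> sqrt (norm q) ^ (n + m)"
  proof (rule power_decreasing)
    have "n \<le> m * n" "m \<le> m * n"
      using assms(3,4) by simp_all
    then show "n + m \<le> 2 * (m * n)"
      by linarith
  qed (use assms(1) in auto)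
  finally show ?thesis
    by (simp add: power_add)
qed

lemma sums_eval_fps_Rop_power:
  assumes a: "0 < a" and G0: "fps_nth G 0 = 0" and q: "norm q < 1"
    and G: "1 \<le> fps_conv_radius G" and x: "norm x \<le> 1"
  shows "(\<lambda>m. fps_nth (yfps ^ a) m * eval_fps G (q ^ m * x)) sums eval_fps ((Rop q ^^ a) G) x"
proof -
  let ?Y = "fps_nth (yfps ^ a)"
  have Y0: "?Y 0 = 0"
    using fps_nth_yfps_power_0[OF a] .
  define F where "F = (\<lambda>(n, m). ?Y m * (fps_nth G n * (q ^ m * x) ^ n))"
  define \<rho> where "\<rho> = sqrt (norm q)"
  have \<rho>: "0 \<le> \<rho>" "\<rho> < 1"
    using q by (simp_all add: \<rho>_def)
  have bound: "norm (F (n, m)) \<le> (norm (fps_nth G n) * \<rho> ^ n) * (norm (?Y m) * \<rho> ^ m)" for n m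
  proof (cases "n = 0 \<or> m = 0")
    case False
    have "norm (F (n, m)) = norm (fps_nth G n) * norm (?Y m) * norm ((q ^ m * x) ^ n)"
      by (simp add: F_def norm_mult)
    also have "\<dots> \<le> norm (fps_nth G n) * norm (?Y m) * (\<rho> ^ n * \<rho> ^ m)"
      using False q x norm_power_mult_power_le[of q x n m]
      by (intro mult_left_mono) (auto simp: \<rho>_def)
    finally show ?thesis
      by (simp add: mult_ac)
  qed (auto simp: F_def G0 Y0)
  have summable_weight: "summable (\<lambda>n. norm (fps_nth f n) * \<rho> ^ n)"
    if "1 \<le> fps_conv_radius f" for f :: "complex fps"
    using \<rho> that by (intro summable_norm_fps_nth_times_power less_fps_conv_radius) auto
  have Y: "1 \<le> fps_conv_radius (yfps ^ a)"
    using fps_conv_radius_yfps_power_mult[of 1 a] by simp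
  have F: "F summable_on UNIV"
    by (rule summable_on_if_dominated_by_product[OF bound summable_weight[OF G] summable_weight[OF Y]])
      (use \<rho> in auto)
  have rows: "(\<lambda>m. F (n, m)) sums (fps_nth ((Rop q ^^ a) G) n * x ^ n)" for n
  proof (cases "n = 0")
    case False
    then have w: "norm (q ^ n) < 1"
      using q by (simp add: norm_power power_less_one_iff)
    have "(\<lambda>m. ?Y m * (q ^ n) ^ m) sums eval_fps (yfps ^ a) (q ^ n)"
      by (rule sums_eval_fps[OF less_fps_conv_radius[OF w Y]])
    then have "(\<lambda>m. ?Y m * (q ^ n) ^ m) sums rfactor q n ^ a"
      using eval_fps_yfps_power_mult[OF w, of 1 a] by (simp add: rfactor_def)
    from sums_mult[OF this, of "fps_nth G n * x ^ n"] show ?thesis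
      by (simp add: F_def fps_nth_Rop_power[OF G0 q] power_mult_distrib mult_ac flip: power_mult)
  qed (simp add: F_def G0 fps_nth_Rop_power[OF G0 q])
  have columns: "(\<lambda>n. F (n, m)) sums (?Y m * eval_fps G (q ^ m * x))" for m
  proof (cases "m = 0")
    case False
    have "norm (q ^ m * x) \<le> norm q ^ m"
      using x by (simp add: norm_mult norm_power mult_left_le)
    also have "\<dots> < 1"
      using False q by (simp add: power_less_one_iff)
    finally show ?thesis
      using sums_mult[OF sums_eval_fps[OF less_fps_conv_radius[OF _ G]], of _ "?Y m"]
      by (simp add: F_def)
  qed (simp add: F_def Y0)
  have "eval_fps ((Rop q ^^ a) G) x = infsum F UNIV"
    using sums_infsum_rows[OF F rows] by (simp add: eval_fps_def sums_iff)
  then show ?thesis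
    using sums_infsum_columns[OF F columns] by simp
qed

definition qpair :: "complex \<Rightarrow> complex fps \<Rightarrow> complex fps \<Rightarrow> complex" where
  "qpair q F G = (\<Sum>n. eval_fps F (q ^ n) * fps_nth G n)"

lemma qpair_Rop_power:
  assumes a: "0 < a" and q: "norm q < 1" and H0: "fps_nth H 0 = 0"
    and H: "1 \<le> fps_conv_radius H" and G: "1 \<le> fps_conv_radius G"
  shows "qpair q ((Rop q ^^ a) H) G = qpair q H (yfps ^ a * G)"
proof -
  let ?Y = "fps_nth (yfps ^ a)" and ?r = "norm q"
  have Y0: "?Y 0 = 0"
    using fps_nth_yfps_power_0[OF a] .
  have Y: "1 \<le> fps_conv_radius (yfps ^ a)"
    using fps_conv_radius_yfps_power_mult[of 1 a] by simp
  obtain K where K: "0 \<le> K" "\<And>z. norm z \<le> ?r \<Longrightarrow> norm (eval_fps H z) \<le> K * norm z"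
    using eval_fps_linear_bound[OF H0 _ less_fps_conv_radius[OF q H]] by auto
  define D where "D = (\<lambda>(k, m). fps_nth G k * (?Y m * eval_fps H (q ^ (k + m))))"
  have bound: "norm (D (k, m)) \<le> (norm (fps_nth G k) * ?r ^ k) * (K * (norm (?Y m) * ?r ^ m))"
    for k m
  proof (cases "m = 0")
    case False
    have "norm (q ^ (k + m)) \<le> ?r"
      using False q power_decreasing[of 1 "k + m" ?r] by (simp add: norm_power)
    from K(2)[OF this] have "norm (eval_fps H (q ^ (k + m))) \<le> K * (?r ^ k * ?r ^ m)"
      by (simp add: norm_mult norm_power power_add)
    then have "norm (fps_nth G k) * norm (?Y m) * norm (eval_fps H (q ^ (k + m)))
        \<le> norm (fps_nth G k) * norm (?Y m) * (K * (?r ^ k * ?r ^ m))"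
      by (rule mult_left_mono) simp
    then show ?thesis
      by (simp add: D_def norm_mult mult_ac)
  qed (simp add: D_def Y0 K(1))
  have D: "D summable_on UNIV"
    by (rule summable_on_if_dominated_by_product[where A = "\<lambda>k. norm (fps_nth G k) * ?r ^ k"
          and B = "\<lambda>m. K * (norm (?Y m) * ?r ^ m)", OF bound])
      (use K(1) summable_norm_fps_nth_times_power[OF _ less_fps_conv_radius[OF q G]]
        summable_norm_fps_nth_times_power[OF _ less_fps_conv_radius[OF q Y]]
        in \<open>auto intro: summable_mult\<close>)
  have rows: "(\<lambda>m. D (k, m)) sums (eval_fps ((Rop q ^^ a) H) (q ^ k) * fps_nth G k)" for k
    using sums_mult[OF sums_eval_fps_Rop_power[OF a H0 q H, of "q ^ k"], of "fps_nth G k"] q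
    by (simp add: D_def norm_power power_le_one power_add mult_ac)
  have antidiagonals: "(\<Sum>m\<le>n. D (n - m, m)) = eval_fps H (q ^ n) * fps_nth (yfps ^ a * G) n"
    for n
  proof -
    have "(\<Sum>m\<le>n. D (n - m, m)) = (\<Sum>m\<le>n. eval_fps H (q ^ n) * (?Y m * fps_nth G (n - m)))"
      by (intro sum.cong) (auto simp: D_def)
    also have "\<dots> = eval_fps H (q ^ n) * fps_nth (yfps ^ a * G) n"
      by (simp add: fps_mult_nth atLeast0AtMost sum_distrib_left)
    finally show ?thesis .
  qed
  show ?thesis
    using sums_infsum_rows[OF D rows] sums_infsum_antidiagonals[OF D]
    by (simp add: qpair_def antidiagonals sums_iff)
qed

lemma qpair_yfps_power_mult:
  assumes q: "norm q < 1" and F: "1 \<le> fps_conv_radius F" and G0: "fps_nth G 0 = 0"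
  shows "qpair q (yfps ^ b * F) G = qpair q F ((Rop q ^^ b) G)"
  unfolding qpair_def
proof (intro arg_cong[where f = suminf] ext)
  fix n
  show "eval_fps (yfps ^ b * F) (q ^ n) * fps_nth G n = eval_fps F (q ^ n) * fps_nth ((Rop q ^^ b) G) n"
  proof (cases "n = 0")
    case False
    then have "norm (q ^ n) < 1"
      using q by (simp add: norm_power power_less_one_iff)
    then show ?thesis
      by (simp add: eval_fps_yfps_power_mult[OF _ F] fps_nth_Rop_power[OF G0 q] rfactor_def)
  qed (simp add: G0 fps_nth_Rop_power[OF G0 q])
qed

lemma qpair_nestR:
  assumes "\<forall>(a, b) \<in> set L. 0 < a \<and> 0 < b" and "\<forall>(a, b) \<in> set N. 0 < a \<and> 0 < b"
    and q: "norm q < 1"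
  shows "qpair q (nestR q L) (nestR q N) = qpair q 1 (nestR q (rev (map prod.swap L) @ N))"
  using assms(1,2)
proof (induction L arbitrary: N)
  case (Cons ab L)
  obtain a b where ab: "ab = (a, b)"
    by fastforce
  with Cons.prems have a: "0 < a" and b: "0 < b" by auto
  have L: "1 \<le> fps_conv_radius (nestR q L)" and N: "1 \<le> fps_conv_radius (nestR q N)"
    using Cons.prems fps_conv_radius_nestR[OF _ q] by (auto intro: less_imp_le)
  have "qpair q (nestR q (ab # L)) (nestR q N)
      = qpair q (yfps ^ b * nestR q L) (yfps ^ a * nestR q N)"
    using qpair_Rop_power[OF a q _ fps_conv_radius_yfps_power_mult[OF L] N] fps_nth_yfps_power_0[OF b]
    by (simp add: ab)
  also have "\<dots> = qpair q (nestR q L) (nestR q ((b, a) # N))"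
    using qpair_yfps_power_mult[OF q L] fps_nth_yfps_power_0[OF a] by simp
  also have "\<dots> = qpair q 1 (nestR q (rev (map prod.swap L) @ (b, a) # N))"
    by (rule Cons.IH) (use Cons.prems a b in \<open>auto simp: ab\<close>)
  finally show ?case
    by (simp add: ab)
qed simp

lemma qpair_1_left: "qpair q 1 G = eval_at_1 G"
  by (simp add: qpair_def eval_at_1_def)

lemma qpair_1_right: "qpair q F 1 = eval_at_1 F"
proof -
  have "(\<lambda>n. eval_fps F (q ^ n) * fps_nth 1 n) = (\<lambda>n. if n = 0 then eval_fps F 1 else 0)"
    by auto
  then show ?thesis
    using sums_single[of 0 "\<lambda>_. eval_fps F 1"]
    by (simp add: qpair_def sums_iff eval_fps_def eval_at_1_def)
qed

theorem corollary3p4: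
  fixes l :: nat and \<alpha>s \<beta>s :: "nat list" and q :: complex
  assumes "l \<ge> 1" and "length \<alpha>s = l" and "length \<beta>s = l"
    and "\<forall>j\<in>set \<alpha>s. j \<ge> 1" and "\<forall>j\<in>set \<beta>s. j \<ge> 1"
    and "norm q < 1"
  shows "summable (fps_nth (nestR q (zip \<alpha>s \<beta>s)))
       \<and> summable (fps_nth (nestR q (rev (zip \<beta>s \<alpha>s))))
       \<and> eval_at_1 (nestR q (zip \<alpha>s \<beta>s)) = eval_at_1 (nestR q (rev (zip \<beta>s \<alpha>s)))"
proof -
  define L where "L = zip \<alpha>s \<beta>s"
  have L: "\<forall>(a, b) \<in> set L. 0 < a \<and> 0 < b"
    using assms(4,5) set_zip_leftD set_zip_rightD by (fastforce simp: L_def)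
  then have L': "\<forall>(a, b) \<in> set (rev (map prod.swap L)). 0 < a \<and> 0 < b"
    by auto
  have swap: "rev (zip \<beta>s \<alpha>s) = rev (map prod.swap L)"
    by (simp add: L_def zip_commute[of \<beta>s] prod.swap_def case_prod_beta')
  have "eval_at_1 (nestR q L) = qpair q (nestR q L) (nestR q [])"
    by (simp add: qpair_1_right)
  also have "\<dots> = eval_at_1 (nestR q (rev (map prod.swap L)))"
    using qpair_nestR[OF L _ assms(6), of "[]"] by (simp add: qpair_1_left)
  finally show ?thesis
    using summable_fps_nth_nestR[OF L assms(6)] summable_fps_nth_nestR[OF L' assms(6)]
    by (simp add: L_def swap)
qed

end
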